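(* Each of the following six sets is a rational Diophantine sextuple, i.e. consists of six distinct positive rational numbers such that for any two distinct elements $x,y$ of the set, $xy+1$ is the square of a rational number: $$\left\{\tfrac{17}{448},\ \tfrac{265}{448},\ \tfrac{2145}{448},\ 252,\ \tfrac{23460}{7},\ \tfrac{2352}{7921}\right\},$$ $$\left\{\tfrac{9}{44},\ \tfrac{91}{132},\ \tfrac{60}{11},\ \tfrac{44}{3},\ \tfrac{1265}{12},\ \tfrac{4420}{3993}\right\},$$ $$\left\{\tfrac{3}{80},\ \tfrac{55}{16},\ \tfrac{28}{5},\ \tfrac{1683}{80},\ 1680,\ \tfrac{2220}{6889}\right\},$$ $$\left\{\tfrac{47}{60},\ \tfrac{287}{240},\ \tfrac{225}{64},\ \tfrac{1463}{60},\ \tfrac{512}{15},\ \tfrac{225}{1156}\right\},$$ $$\left\{\tfrac{27}{1856},\ \tfrac{2065}{5568},\ \tfrac{116}{3},\ \tfrac{23693}{192},\ \tfrac{12880}{87},\ \tfrac{21420}{229709}\right\},$$ $$\left\{\tfrac{21}{352},\ \tfrac{237}{352},\ \tfrac{280}{33},\ \tfrac{1573}{96},\ \tfrac{4680}{11},\ \tfrac{398090}{236883}\right\}.$$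
   Context: A rational Diophantine $m$-tuple is a set of $m$ distinct positive rational numbers such that the product of any two distinct elements, plus $1$, is the square of a rational number. A sextuple is the case $m=6$. *)

theory Defs
  imports Complex_Main
begin

definition rational_diophantine_tuple :: "nat \<Rightarrow> rat set \<Rightarrow> bool" where
  "rational_diophantine_tuple m S \<longleftrightarrow>
     finite S \<and> card S = m \<and> (\<forall>x\<in>S. x > 0) \<and>
     (\<forall>x\<in>S. \<forall>y\<in>S. x \<noteq> y \<longrightarrow> (\<exists>r::rat. x * y + 1 = r ^ 2))"

abbreviation rational_diophantine_sextuple :: "rat set \<Rightarrow> bool" where
  "rational_diophantine_sextuple S \<equiv> rational_diophantine_tuple 6 S"

end

theory Submission
  imports Defs "HOL-Computational_Algebra.Nth_Powers"
begin

(* The theorem is a finite check: for each sextuple, besides distinctness and positivity,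
   the fifteen numbers x y + 1 must be rational squares. Each is certified by an explicit square
   root; the roots are listed for the pairs in lexicographic order of position. *)

lemma rational_diophantine_tuple_empty: "rational_diophantine_tuple 0 {}"
  by (simp add: rational_diophantine_tuple_def)

lemma rational_diophantine_tuple_insert:
  assumes "x \<notin> S" and "0 < x" and "\<forall>y\<in>S. is_square (x * y + 1)"
    and "rational_diophantine_tuple n S"
  shows "rational_diophantine_tuple (Suc n) (insert x S)"
  using assms unfolding rational_diophantine_tuple_def is_nth_power_def
  by (auto simp: mult.commute)

lemmas rational_diophantine_tuple_intros =
  rational_diophantine_tuple_insert rational_diophantine_tuple_empty

lemma sextuple_17_448:
  "rational_diophantine_sextuple {17/448, 265/448, 2145/448, 252, 23460/7, 2352/7921}"
proof -
  have "list_all (\<lambda>r. is_square (r\<^sup>2))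
    [453/448, 487/448, 13/4, 317/28, 179/178, 877/448, 49/4, 1247/28, 193/178, 139/4,
     3547/28, 277/178, 919, 775/89, 2809/89 :: rat]"
    by simp
  then show ?thesis
    by (simp add: numeral_eq_Suc rational_diophantine_tuple_intros)
qed

lemma sextuple_9_44:
  "rational_diophantine_sextuple {9/44, 91/132, 60/11, 44/3, 1265/12, 4420/3993}"
proof -
  have "list_all (\<lambda>r. is_square (r\<^sup>2))
    [47/44, 16/11, 2, 19/4, 134/121, 24/11, 10/3, 103/12, 482/363, 9,
     24, 321/121, 118/3, 137/33, 358/33 :: rat]"
    by simp
  then show ?thesis
    by (simp add: numeral_eq_Suc rational_diophantine_tuple_intros)
qed

lemma sextuple_3_80:
  "rational_diophantine_sextuple {3/80, 55/16, 28/5, 1683/80, 1680, 2220/6889}"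
proof -
  have "list_all (\<lambda>r. is_square (r\<^sup>2))
    [17/16, 11/10, 107/80, 8, 167/166, 9/2, 137/16, 76, 241/166, 109/10,
     97, 139/83, 188, 463/166, 1933/83 :: rat]"
    by simp
  then show ?thesis
    by (simp add: numeral_eq_Suc rational_diophantine_tuple_intros)
qed

lemma sextuple_47_60:
  "rational_diophantine_sextuple {47/60, 287/240, 225/64, 1463/60, 512/15, 225/1156}"
proof -
  have "list_all (\<lambda>r. is_square (r\<^sup>2))
    [167/120, 31/16, 269/60, 79/15, 73/68, 73/32, 659/120, 97/15, 151/136, 149/16,
     11, 353/272, 433/15, 163/68, 47/17 :: rat]"
    by simp
  then show ?thesis
    by (simp add: numeral_eq_Suc rational_diophantine_tuple_intros)
qed

lemma sextuple_27_1856: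
  "rational_diophantine_sextuple {27/1856, 2065/5568, 116/3, 23693/192, 12880/87, 21420/229709}"
proof -
  have "list_all (\<lambda>r. is_square (r\<^sup>2))
    [1861/1856, 5/4, 107/64, 103/58, 10331/10324, 47/12, 1313/192, 1301/174, 10501/10324,
     829/12, 227/3, 191/89, 811/6, 1259/356, 9931/2581 :: rat]"
    by simp
  then show ?thesis
    by (simp add: numeral_eq_Suc rational_diophantine_tuple_intros)
qed

lemma sextuple_21_352:
  "rational_diophantine_sextuple {21/352, 237/352, 280/33, 1573/96, 4680/11, 398090/236883}"
proof -
  have "list_all (\<lambda>r. is_square (r\<^sup>2))
    [359/352, 27/22, 45/32, 113/22, 1179/1124, 57/22, 111/32, 373/22, 1641/1124, 71/6,
     661/11, 3293/843, 167/2, 18013/3372, 7519/281 :: rat]"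
    by simp
  then show ?thesis
    by (simp add: numeral_eq_Suc rational_diophantine_tuple_intros)
qed

theorem mainTheorem2:
  shows "rational_diophantine_sextuple {17/448, 265/448, 2145/448, 252, 23460/7, 2352/7921}
       \<and> rational_diophantine_sextuple {9/44, 91/132, 60/11, 44/3, 1265/12, 4420/3993}
       \<and> rational_diophantine_sextuple {3/80, 55/16, 28/5, 1683/80, 1680, 2220/6889}
       \<and> rational_diophantine_sextuple {47/60, 287/240, 225/64, 1463/60, 512/15, 225/1156}
       \<and> rational_diophantine_sextuple {27/1856, 2065/5568, 116/3, 23693/192, 12880/87, 21420/229709}
       \<and> rational_diophantine_sextuple {21/352, 237/352, 280/33, 1573/96, 4680/11, 398090/236883}"
  using sextuple_17_448 sextuple_9_44 sextuple_3_80 sextuple_47_60 sextuple_27_1856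
    sextuple_21_352
  by blast

end
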